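(* Let $q\ge2$ and let $n,k$ be integers with $0<k\le n$. Then $$2^{nE_{k,q}}\le a_q(n,k)\le 2^{nE_{k,q}}+2q^{\,n-\lceil k/2\rceil}.$$
   Context: $\Sigma_q=\{0,\dots,q-1\}$. A vector in $\Sigma_q^n$ is a $k$-RLL vector if $n<k$ or it has no run of $k$ consecutive zeros; $a_q(n,k)$ is the number of $k$-RLL vectors in $\Sigma_q^n$. For fixed $k,q$, the capacity is $E_{k,q}=\lim_{n\to\infty}\frac{\log_2 a_q(n,k)}{n}$ (this limit exists). *)

theory Defs
  imports Complex_Main
begin

definition is_RLL :: "nat \<Rightarrow> nat list \<Rightarrow> bool" where
  "is_RLL k xs \<longleftrightarrow> length xs < k \<or>
     \<not> (\<exists>i. i + k \<le> length xs \<and> (\<forall>j<k. xs ! (i + j) = 0))"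

definition RLL_vectors :: "nat \<Rightarrow> nat \<Rightarrow> nat \<Rightarrow> nat list set" where
  "RLL_vectors q n k = {xs. length xs = n \<and> set xs \<subseteq> {0..<q} \<and> is_RLL k xs}"

definition a_RLL :: "nat \<Rightarrow> nat \<Rightarrow> nat \<Rightarrow> nat" where
  "a_RLL q n k = card (RLL_vectors q n k)"

definition capacity :: "nat \<Rightarrow> nat \<Rightarrow> real" where
  "capacity k q = lim (\<lambda>n. log 2 (real (a_RLL q n k)) / real n)"

end

theory Submission
  imports Defs "HOL-Library.Sublist"
begin

(*
  Put c = \<lceil>k/2\<rceil>. Words having a nonzero symbol among their first c and among their last c
  positions can be concatenated freely: a run of zeros across a junction has length at most
  2(c - 1) < k. So if b counts such k-RLL words of length n, then b^m \<le> a(mn) for all m \<ge> 1.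
  As a is submultiplicative, Fekete's lemma gives E = inf log2 a(n) / n; this yields both
  2^(nE) \<le> a(n) and, along the subsequence mn, b \<le> 2^(nE). Every other k-RLL word of length n
  starts or ends with c zeros, and there are at most 2 q^(n-c) of those.
*)

lemma subadditive_le_mult_add:
  fixes f :: "nat \<Rightarrow> real"
  assumes "\<And>m n. f (m + n) \<le> f m + f n"
  shows "f (s * p + r) \<le> real s * f p + f r"
proof (induction s)
  case (Suc s)
  have "f (Suc s * p + r) \<le> f p + f (s * p + r)"
    using assms[of p "s * p + r"] by (simp add: add.assoc)
  with Suc show ?case by (simp add: algebra_simps)
qed simp

lemma subadditive_quotient_le:
  fixes f :: "nat \<Rightarrow> real"
  assumes sub: "\<And>m n. f (m + n) \<le> f m + f n" and nonneg: "\<And>n. 0 \<le> f n"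
    and "0 < p" "0 < n"
  shows "f n / n \<le> f p / p + (f 0 + p * f 1) / n"
proof -
  have "f (n mod p) \<le> f 0 + (n mod p) * f 1"
    using subadditive_le_mult_add[of f "n mod p" 1 0] sub by simp
  also have "\<dots> \<le> f 0 + p * f 1"
    using \<open>0 < p\<close> nonneg[of 1] by (simp add: mult_right_mono less_imp_le)
  finally have rem: "f (n mod p) \<le> f 0 + p * f 1" .
  have "real (n div p) * f p \<le> (n / p) * f p"
    using nonneg[of p] by (intro mult_right_mono of_nat_div_le_of_nat)
  moreover have "f n \<le> real (n div p) * f p + f (n mod p)"
    using subadditive_le_mult_add[of f "n div p" p "n mod p"] sub by simp
  ultimately have "f n \<le> n * (f p / p) + (f 0 + p * f 1)"
    using rem by simp
  then show ?thesis
    using \<open>0 < n\<close> by (simp add: field_simps)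
qed

lemma subadditive_LIMSEQ_Inf:
  fixes f :: "nat \<Rightarrow> real"
  assumes sub: "\<And>m n. f (m + n) \<le> f m + f n" and nonneg: "\<And>n. 0 \<le> f n"
  shows "(\<lambda>n. f n / n) \<longlonglongrightarrow> Inf ((\<lambda>n. f n / n) ` {1..})"
proof (rule LIMSEQ_I)
  define L where "L = Inf ((\<lambda>n. f n / n) ` {1..})"
  have bdd: "bdd_below ((\<lambda>n. f n / n) ` {1..})"
    by (rule bdd_belowI[of _ 0]) (auto intro: nonneg divide_nonneg_nonneg)
  fix e :: real assume "0 < e"
  then obtain p where p: "1 \<le> p" "f p / p < L + e / 2"
    using cInf_less_iff[OF _ bdd, of "L + e / 2"] unfolding L_def by auto
  define C where "C = f 0 + p * f 1"
  obtain N :: nat where N: "2 * C / e < N"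
    using reals_Archimedean2 by blast
  have "\<bar>f n / n - L\<bar> < e" if "Suc N \<le> n" for n
  proof -
    have "0 < n" using that by simp
    have "2 * C / e < n"
      using N that by (smt (verit) Suc_le_eq of_nat_less_iff)
    then have "C / n < e / 2"
      using \<open>0 < e\<close> \<open>0 < n\<close> by (simp add: field_simps)
    moreover have "f n / n \<le> f p / p + C / n"
      unfolding C_def using p \<open>0 < n\<close> by (intro subadditive_quotient_le sub nonneg) auto
    moreover have "L \<le> f n / n"
      unfolding L_def using \<open>0 < n\<close> bdd by (intro cInf_lower) auto
    ultimately show ?thesis using p by linarith
  qed
  then show "\<exists>N. \<forall>n\<ge>N. norm (f n / n - Inf ((\<lambda>n. f n / n) ` {1..})) < e"
    unfolding L_def by auto
qed

context
  fixes x :: "nat \<Rightarrow> real"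
  assumes ge_one: "\<And>n. 1 \<le> x n" and submult: "\<And>m n. x (m + n) \<le> x m * x n"
begin

private lemma pos: "0 < x n"
  using ge_one[of n] by simp

lemma submultiplicative_log_LIMSEQ:
  "(\<lambda>n. log 2 (x n) / n) \<longlonglongrightarrow> Inf ((\<lambda>n. log 2 (x n) / n) ` {1..})"
proof (rule subadditive_LIMSEQ_Inf)
  fix m n
  have "log 2 (x (m + n)) \<le> log 2 (x m * x n)"
    using submult by (simp add: pos)
  also have "\<dots> = log 2 (x m) + log 2 (x n)"
    using pos[of m] pos[of n] by (simp add: log_mult)
  finally show "log 2 (x (m + n)) \<le> log 2 (x m) + log 2 (x n)" .
qed (simp add: pos ge_one)

lemma powr_lim_log_le:
  assumes "0 < n"
  shows "2 powr (n * lim (\<lambda>n. log 2 (x n) / n)) \<le> x n"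
proof -
  have "lim (\<lambda>n. log 2 (x n) / n) \<le> log 2 (x n) / n"
    unfolding limI[OF submultiplicative_log_LIMSEQ] using assms
    by (intro cInf_lower bdd_belowI[of _ 0]) (auto intro: divide_nonneg_nonneg simp: pos ge_one)
  then have "2 powr (n * lim (\<lambda>n. log 2 (x n) / n)) \<le> 2 powr (log 2 (x n))"
    using assms by (simp add: field_simps)
  then show ?thesis by (simp add: pos)
qed

lemma le_powr_lim_log:
  assumes "0 < n" and pow_le: "\<And>m. 0 < m \<Longrightarrow> b ^ m \<le> x (m * n)"
  shows "b \<le> 2 powr (n * lim (\<lambda>n. log 2 (x n) / n))"
proof (cases "0 < b")
  case True
  have "(\<lambda>n. log 2 (x n) / n) \<longlonglongrightarrow> lim (\<lambda>n. log 2 (x n) / n)"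
    by (rule convergentI[OF submultiplicative_log_LIMSEQ, unfolded convergent_LIMSEQ_iff])
  from LIMSEQ_subseq_LIMSEQ[OF this, of "\<lambda>m. m * n"]
  have "(\<lambda>m. log 2 (x (m * n)) / (m * n)) \<longlonglongrightarrow> lim (\<lambda>n. log 2 (x n) / n)"
    using assms(1) by (simp add: strict_mono_def o_def)
  moreover have "log 2 b / n \<le> log 2 (x (m * n)) / (m * n)" if "0 < m" for m
  proof -
    have "m * log 2 b = log 2 (b ^ m)" using True by (simp add: log_nat_power)
    also have "\<dots> \<le> log 2 (x (m * n))"
      using pow_le[OF that] True by (simp add: pos)
    finally show ?thesis using that assms(1) by (simp add: field_simps)
  qed
  ultimately have "log 2 b / n \<le> lim (\<lambda>n. log 2 (x n) / n)"
    by (intro LIMSEQ_le_const) (auto intro: exI[of _ 1])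
  then have "2 powr log 2 b \<le> 2 powr (n * lim (\<lambda>n. log 2 (x n) / n))"
    using assms(1) by (simp add: field_simps)
  then show ?thesis using True by simp
qed (meson order_trans linorder_not_less powr_ge_zero)

end

lemma is_RLL_iff_not_sublist: "is_RLL k xs \<longleftrightarrow> \<not> sublist (replicate k 0) xs"
proof -
  have "sublist (replicate k 0) xs \<longleftrightarrow> (\<exists>i. i + k \<le> length xs \<and> (\<forall>j<k. xs ! (i + j) = 0))"
  proof
    assume "sublist (replicate k 0) xs"
    then obtain ps ss where "xs = ps @ replicate k 0 @ ss" unfolding sublist_def by blast
    then show "\<exists>i. i + k \<le> length xs \<and> (\<forall>j<k. xs ! (i + j) = 0)"
      by (intro exI[of _ "length ps"]) (auto simp: nth_append)
  next
    assume "\<exists>i. i + k \<le> length xs \<and> (\<forall>j<k. xs ! (i + j) = 0)"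
    then obtain i where i: "i + k \<le> length xs" "\<forall>j<k. xs ! (i + j) = 0" by blast
    then have "take k (drop i xs) = replicate k 0" by (intro nth_equalityI) auto
    then have "xs = take i xs @ replicate k 0 @ drop k (drop i xs)"
      by (metis append_take_drop_id)
    then show "sublist (replicate k 0) xs" unfolding sublist_def by blast
  qed
  moreover have "sublist (replicate k 0) xs \<Longrightarrow> k \<le> length xs"
    using sublist_length_le by fastforce
  ultimately show ?thesis unfolding is_RLL_def by auto
qed

lemma is_RLL_sublist: "is_RLL k ys \<Longrightarrow> sublist xs ys \<Longrightarrow> is_RLL k xs"
  unfolding is_RLL_iff_not_sublist using sublist_order.order_trans by blast

lemma replicate_RLL: "0 < k \<Longrightarrow> x \<noteq> 0 \<Longrightarrow> is_RLL k (replicate n x)"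
  unfolding is_RLL_iff_not_sublist using set_mono_sublist by fastforce

definition nonzero_ends :: "nat \<Rightarrow> nat list \<Rightarrow> bool" where
  "nonzero_ends c xs \<longleftrightarrow>
     c \<le> length xs \<and> \<not> prefix (replicate c 0) xs \<and> \<not> suffix (replicate c 0) xs"

lemma replicate_eq_appendD:
  "replicate n x = ys @ zs \<Longrightarrow> ys = replicate (length ys) x \<and> zs = replicate (length zs) x"
  by (metis Un_iff in_set_replicate replicate_length_same set_append)

lemma is_RLL_append:
  assumes "2 * c \<le> k + 1" "is_RLL k xs" "is_RLL k ys"
    and "\<not> suffix (replicate c 0) xs" "\<not> prefix (replicate c 0) ys"
  shows "is_RLL k (xs @ ys)"
  unfolding is_RLL_iff_not_sublist
proof
  assume "sublist (replicate k 0) (xs @ ys)"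
  with assms(2,3) obtain us vs where uv: "replicate k 0 = us @ vs" "suffix us xs" "prefix vs ys"
    unfolding is_RLL_iff_not_sublist sublist_append by blast
  have "length us + length vs = k" using arg_cong[OF uv(1), of length] by simp
  with assms(1) consider "c \<le> length us" | "c \<le> length vs" by linarith
  then show False
  proof cases
    case 1
    then have "suffix (replicate c 0) us"
      by (metis replicate_eq_appendD[OF uv(1)] le_add_diff_inverse2 replicate_add suffixI)
    then show False using assms(4) uv(2) suffix_order.order_trans by blast
  next
    case 2
    then have "prefix (replicate c 0) vs"
      by (metis replicate_eq_appendD[OF uv(1)] le_add_diff_inverse replicate_add prefixI)
    then show False using assms(5) uv(3) prefix_order.order_trans by blast
  qed
qed

lemma nonzero_ends_append:
  assumes "nonzero_ends c xs" "nonzero_ends c ys"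
  shows "nonzero_ends c (xs @ ys)"
proof -
  have "\<not> prefix (replicate c 0) (xs @ ys)"
  proof
    assume "prefix (replicate c 0) (xs @ ys)"
    with assms(1) obtain us where us: "replicate c 0 = xs @ us"
      unfolding nonzero_ends_def prefix_append by blast
    moreover have "us = []"
      using assms(1) arg_cong[OF us, of length] unfolding nonzero_ends_def by simp
    ultimately show False using assms(1) unfolding nonzero_ends_def by simp
  qed
  moreover have "\<not> suffix (replicate c 0) (xs @ ys)"
  proof
    assume "suffix (replicate c 0) (xs @ ys)"
    with assms(2) obtain us where us: "replicate c 0 = us @ ys"
      unfolding nonzero_ends_def suffix_append by blast
    moreover have "us = []"
      using assms(2) arg_cong[OF us, of length] unfolding nonzero_ends_def by simp
    ultimately show False using assms(2) unfolding nonzero_ends_def by simp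
  qed
  ultimately show ?thesis using assms(1) unfolding nonzero_ends_def by simp
qed

lemma finite_RLL_vectors: "finite (RLL_vectors q n k)"
  by (rule finite_subset[OF _ finite_lists_length_eq[of "{0..<q}" n]])
    (auto simp: RLL_vectors_def)

lemma a_RLL_pos:
  assumes "2 \<le> q" "0 < k"
  shows "0 < a_RLL q n k"
proof -
  have "replicate n 1 \<in> RLL_vectors q n k"
    using assms replicate_RLL[of k 1] by (auto simp: RLL_vectors_def)
  then show ?thesis
    unfolding a_RLL_def using finite_RLL_vectors card_gt_0_iff by blast
qed

lemma a_RLL_add_le: "a_RLL q (m + n) k \<le> a_RLL q m k * a_RLL q n k"
proof -
  have "card (RLL_vectors q (m + n) k) \<le> card (RLL_vectors q m k \<times> RLL_vectors q n k)"
  proof (rule card_inj_on_le[where f = "\<lambda>xs. (take m xs, drop m xs)"])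
    show "inj_on (\<lambda>xs. (take m xs, drop m xs)) (RLL_vectors q (m + n) k)"
      by (rule inj_onI) (metis append_take_drop_id prod.inject)
    show "(\<lambda>xs. (take m xs, drop m xs)) ` RLL_vectors q (m + n) k
            \<subseteq> RLL_vectors q m k \<times> RLL_vectors q n k"
      by (auto simp: RLL_vectors_def intro: is_RLL_sublist dest: in_set_takeD in_set_dropD)
  qed (simp add: finite_RLL_vectors)
  then show ?thesis unfolding a_RLL_def by (simp add: card_cartesian_product)
qed

definition RLL_nonzero_ends :: "nat \<Rightarrow> nat \<Rightarrow> nat \<Rightarrow> nat \<Rightarrow> nat list set" where
  "RLL_nonzero_ends q n k c = {xs \<in> RLL_vectors q n k. nonzero_ends c xs}"

lemma finite_RLL_nonzero_ends: "finite (RLL_nonzero_ends q n k c)"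
  unfolding RLL_nonzero_ends_def using finite_RLL_vectors by simp

lemma append_in_RLL_nonzero_ends:
  assumes "2 * c \<le> k + 1" "xs \<in> RLL_nonzero_ends q m k c" "ys \<in> RLL_nonzero_ends q n k c"
  shows "xs @ ys \<in> RLL_nonzero_ends q (m + n) k c"
proof -
  have "is_RLL k (xs @ ys)"
    using assms by (intro is_RLL_append[OF assms(1)])
      (simp_all add: RLL_nonzero_ends_def RLL_vectors_def nonzero_ends_def)
  moreover have "nonzero_ends c (xs @ ys)"
    using assms(2,3) by (intro nonzero_ends_append) (simp_all add: RLL_nonzero_ends_def)
  ultimately show ?thesis
    using assms(2,3) by (auto simp: RLL_nonzero_ends_def RLL_vectors_def)
qed

lemma card_RLL_nonzero_ends_add_ge:
  assumes "2 * c \<le> k + 1"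
  shows "card (RLL_nonzero_ends q m k c) * card (RLL_nonzero_ends q n k c)
           \<le> card (RLL_nonzero_ends q (m + n) k c)"
proof -
  have "card (RLL_nonzero_ends q m k c \<times> RLL_nonzero_ends q n k c)
          \<le> card (RLL_nonzero_ends q (m + n) k c)"
  proof (rule card_inj_on_le[where f = "\<lambda>(xs, ys). xs @ ys"])
    show "inj_on (\<lambda>(xs, ys). xs @ ys) (RLL_nonzero_ends q m k c \<times> RLL_nonzero_ends q n k c)"
    proof (rule inj_onI, clarify)
      fix xs ys xs' ys'
      assume "xs \<in> RLL_nonzero_ends q m k c" "xs' \<in> RLL_nonzero_ends q m k c"
        and "xs @ ys = xs' @ ys'"
      then show "xs = xs' \<and> ys = ys'"
        by (simp add: RLL_nonzero_ends_def RLL_vectors_def)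
    qed
    show "(\<lambda>(xs, ys). xs @ ys) ` (RLL_nonzero_ends q m k c \<times> RLL_nonzero_ends q n k c)
            \<subseteq> RLL_nonzero_ends q (m + n) k c"
      using append_in_RLL_nonzero_ends[OF assms] by auto
  qed (rule finite_RLL_nonzero_ends)
  then show ?thesis by (simp add: card_cartesian_product)
qed

lemma card_RLL_nonzero_ends_power_le:
  assumes "2 * c \<le> k + 1" "0 < m"
  shows "card (RLL_nonzero_ends q n k c) ^ m \<le> a_RLL q (m * n) k"
proof -
  let ?b = "card (RLL_nonzero_ends q n k c)"
  have "?b ^ m \<le> card (RLL_nonzero_ends q (m * n) k c)"
    using assms(2)
  proof (induction m rule: nat_induct_non_zero)
    case (Suc m)
    have "?b ^ Suc m = ?b * ?b ^ m" by simp
    also have "\<dots> \<le> ?b * card (RLL_nonzero_ends q (m * n) k c)"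
      using Suc.IH by (rule mult_le_mono2)
    also have "\<dots> \<le> card (RLL_nonzero_ends q (n + m * n) k c)"
      by (rule card_RLL_nonzero_ends_add_ge[OF assms(1)])
    finally show ?case by simp
  qed simp
  also have "\<dots> \<le> a_RLL q (m * n) k"
    unfolding a_RLL_def RLL_nonzero_ends_def by (intro card_mono finite_RLL_vectors) auto
  finally show ?thesis .
qed

lemma a_RLL_le_RLL_nonzero_ends:
  assumes "c \<le> n"
  shows "a_RLL q n k \<le> card (RLL_nonzero_ends q n k c) + 2 * q ^ (n - c)"
proof -
  define W where "W = {zs. set zs \<subseteq> {0..<q} \<and> length zs = n - c}"
  have finite_W: "finite W" unfolding W_def by (simp add: finite_lists_length_eq)
  have "RLL_vectors q n k \<subseteq> RLL_nonzero_ends q n k c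
          \<union> (\<lambda>zs. replicate c 0 @ zs) ` W \<union> (\<lambda>zs. zs @ replicate c 0) ` W"
  proof
    fix xs assume xs: "xs \<in> RLL_vectors q n k"
    then have "length xs = n" "set xs \<subseteq> {0..<q}" by (auto simp: RLL_vectors_def)
    consider "nonzero_ends c xs" | "prefix (replicate c 0) xs" | "suffix (replicate c 0) xs"
      using \<open>length xs = n\<close> assms unfolding nonzero_ends_def by blast
    then show "xs \<in> RLL_nonzero_ends q n k c
          \<union> (\<lambda>zs. replicate c 0 @ zs) ` W \<union> (\<lambda>zs. zs @ replicate c 0) ` W"
    proof cases
      case 1
      then show ?thesis using xs by (simp add: RLL_nonzero_ends_def)
    next
      case 2
      then obtain zs where "xs = replicate c 0 @ zs" by (auto elim: prefixE)
      moreover have "zs \<in> W"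
        using \<open>length xs = n\<close> \<open>set xs \<subseteq> {0..<q}\<close> calculation by (auto simp: W_def)
      ultimately show ?thesis by blast
    next
      case 3
      then obtain zs where "xs = zs @ replicate c 0" by (auto elim: suffixE)
      moreover have "zs \<in> W"
        using \<open>length xs = n\<close> \<open>set xs \<subseteq> {0..<q}\<close> calculation by (auto simp: W_def)
      ultimately show ?thesis by blast
    qed
  qed
  then have "a_RLL q n k \<le> card (RLL_nonzero_ends q n k c
          \<union> (\<lambda>zs. replicate c 0 @ zs) ` W \<union> (\<lambda>zs. zs @ replicate c 0) ` W)"
    unfolding a_RLL_def by (intro card_mono) (auto simp: finite_RLL_nonzero_ends finite_W)
  also have "\<dots> \<le> card (RLL_nonzero_ends q n k c)
      + card ((\<lambda>zs. replicate c 0 @ zs) ` W) + card ((\<lambda>zs. zs @ replicate c 0) ` W)"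
    by (rule order_trans[OF card_Un_le add_right_mono[OF card_Un_le]])
  also have "\<dots> \<le> card (RLL_nonzero_ends q n k c) + card W + card W"
    using card_image_le[OF finite_W] by (intro add_mono) auto
  also have "card W = q ^ (n - c)"
    unfolding W_def using card_lists_length_eq[of "{0..<q}"] by simp
  finally show ?thesis by simp
qed

lemma ceiling_half: "real_of_int \<lceil>real k / 2\<rceil> = real ((k + 1) div 2)"
proof -
  have "\<lceil>real_of_int (int k) / real_of_int 2\<rceil> = - (- int k div 2)"
    by (rule ceiling_divide_eq_div)
  also have "\<dots> = int ((k + 1) div 2)" by presburger
  finally show ?thesis by simp
qed

theorem lemma2:
  fixes q n k :: nat
  assumes "q \<ge> 2" and "0 < k" and "k \<le> n"
  shows "2 powr (real n * capacity k q) \<le> real (a_RLL q n k) \<and>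
         real (a_RLL q n k) \<le> 2 powr (real n * capacity k q)
            + 2 * real q powr (real n - real_of_int \<lceil>real k / 2\<rceil>)"
proof -
  define x where "x m = real (a_RLL q m k)" for m
  have x: "1 \<le> x m" "x (m + m') \<le> x m * x m'" for m m'
    unfolding x_def using a_RLL_pos[OF assms(1,2)] a_RLL_add_le[of q m m' k]
    by (simp_all add: Suc_le_eq flip: of_nat_mult)
  have capacity: "capacity k q = lim (\<lambda>m. log 2 (x m) / m)"
    by (simp add: capacity_def x_def)
  define c where "c = (k + 1) div 2"
  have c: "2 * c \<le> k + 1" "c \<le> n" "0 < n" using assms by (auto simp: c_def)
  have "card (RLL_nonzero_ends q n k c) \<le> 2 powr (n * capacity k q)"
    unfolding capacity using x c(3) card_RLL_nonzero_ends_power_le[OF c(1)]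
    by (intro le_powr_lim_log) (auto simp: x_def simp flip: of_nat_power)
  moreover have "a_RLL q n k \<le> card (RLL_nonzero_ends q n k c) + 2 * real q ^ (n - c)"
    using a_RLL_le_RLL_nonzero_ends[OF c(2)] of_nat_mono by fastforce
  moreover have "real q powr (real n - real_of_int \<lceil>real k / 2\<rceil>) = real q ^ (n - c)"
    using assms(1) c(2) by (simp add: ceiling_half c_def powr_realpow flip: of_nat_diff)
  moreover have "2 powr (n * capacity k q) \<le> x n"
    unfolding capacity using x c(3) by (rule powr_lim_log_le)
  ultimately show ?thesis unfolding x_def by linarith
qed

end
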